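(* Assume $f:[a,b]\to\mathbb{R}$ has an analytic extension. Then there exist constants $C,\gamma>0$, depending only on $f$, such that for every $L\in\mathbb{N}$ there exists a ReLU neural network $\Phi_L:\mathbb{R}\to\mathbb{R}$ with \[ \sup_{x\in[a,b]}|f(x)-\Phi_L(x)|\le C\exp(-\gamma L^{1/2}),\qquad \mathrm{depth}(\Phi_L)\le CL,\qquad \mathrm{width}(\Phi_L)\le C. \]
   Context: A function $F:(\alpha,\beta)\to\mathbb{R}$ is analytic if for every $x_0\in(\alpha,\beta)$ there are $r>0$ and $(a_k)_{k\ge0}$ with $\sum_k|a_k|r^k<\infty$ and $F(x)=\sum_ka_k(x-x_0)^k$ for $|x-x_0|<r$. A function $f:[a,b]\to\mathbb{R}$ has an analytic extension if there is an analytic $F:(\alpha,\beta)\to\mathbb{R}$ with $[a,b]\subset(\alpha,\beta)$ and $F=f$ on $[a,b]$. For a neural network, depth is the number of hidden layers and width the maximal number of neurons in a hidden layer; ReLU is $\sigma(x)=\max(x,0)$. *)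

theory Defs
  imports "HOL-Analysis.Analysis"
begin

definition analytic_interval :: "(real \<Rightarrow> real) \<Rightarrow> real \<Rightarrow> real \<Rightarrow> bool" where
  "analytic_interval F \<alpha> \<beta> \<longleftrightarrow>
     (\<forall>x0 \<in> {\<alpha><..<\<beta>}. \<exists>r > 0. \<exists>c :: nat \<Rightarrow> real.
        summable (\<lambda>k. \<bar>c k\<bar> * r ^ k) \<and>
        (\<forall>x \<in> {\<alpha><..<\<beta>}. \<bar>x - x0\<bar> < r \<longrightarrow> F x = (\<Sum>k. c k * (x - x0) ^ k)))"

definition has_analytic_extension :: "(real \<Rightarrow> real) \<Rightarrow> real \<Rightarrow> real \<Rightarrow> bool" where
  "has_analytic_extension f a b \<longleftrightarrow>
     (\<exists>F \<alpha> \<beta>. \<alpha> < a \<and> b < \<beta> \<and> analytic_interval F \<alpha> \<beta> \<and> (\<forall>x \<in> {a..b}. F x = f x))"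

text \<open>A layer is an affine map given by (output dimension m, weight matrix W, bias b);
vectors are functions nat => real, only the first components are meaningful.\<close>
type_synonym layer = "nat \<times> (nat \<Rightarrow> nat \<Rightarrow> real) \<times> (nat \<Rightarrow> real)"

definition relu :: "real \<Rightarrow> real" where
  "relu x = max x 0"

definition affine_layer :: "nat \<Rightarrow> layer \<Rightarrow> (nat \<Rightarrow> real) \<Rightarrow> (nat \<Rightarrow> real)" where
  "affine_layer n l x = (case l of (m, W, b) \<Rightarrow>
      (\<lambda>i. if i < m then (\<Sum>j<n. W i j * x j) + b i else 0))"

text \<open>Evaluation: A_{L+1} o relu o A_L o ... o relu o A_1, first argument = input dimension.\<close>
fun nn_eval :: "nat \<Rightarrow> layer list \<Rightarrow> (nat \<Rightarrow> real) \<Rightarrow> (nat \<Rightarrow> real)" where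
  "nn_eval n [] x = x"
| "nn_eval n [l] x = affine_layer n l x"
| "nn_eval n (l # l' # ls) x = nn_eval (fst l) (l' # ls) (\<lambda>i. relu (affine_layer n l x i))"

definition nn_valid :: "layer list \<Rightarrow> bool" where
  "nn_valid ls \<longleftrightarrow> ls \<noteq> [] \<and> fst (last ls) = 1"

definition nn_realize :: "layer list \<Rightarrow> real \<Rightarrow> real" where
  "nn_realize ls t = nn_eval 1 ls (\<lambda>i. if i = 0 then t else 0) 0"

text \<open>Depth = number of hidden layers; width = maximal number of neurons in a hidden layer.\<close>
definition nn_depth :: "layer list \<Rightarrow> nat" where
  "nn_depth ls = length ls - 1"

definition nn_width :: "layer list \<Rightarrow> nat" where
  "nn_width ls = Max (insert 0 (set (map fst (butlast ls))))"

end

theory Submission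
  imports Defs
begin

text \<open>By compactness, [a, b] splits into finitely many intervals on each of which f is a power series
  in a rescaled variable u, |u| < 1, whose coefficients are summable against 2^k. On each interval,
  truncating the series after n terms costs O(2^-n), and the truncated polynomial is evaluated by Horner's
  scheme, every multiplication being carried out by a ReLU block of depth n + 3: u z is recovered by
  polarization from two squares, and a^2 on [0, 1] is approximated to within 4^-n by Yarotsky's sawtooth
  construction. A network of constant width thus computes the sum of the interval contributions with
  error O(2^-n) and depth O(n^2); taking n = floor (sqrt L) gives the rate exp (- ln 2 sqrt L) at depth O(L).\<close>

definition sparse_dot :: "(nat \<times> real) list \<Rightarrow> (nat \<Rightarrow> real) \<Rightarrow> real" where
  "sparse_dot ps h = sum_list (map (\<lambda>(k,c). c * h k) ps)"

definition sparse_row :: "(nat \<times> real) list \<Rightarrow> nat \<Rightarrow> real" where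
  "sparse_row ps j = sum_list (map (\<lambda>(k,c). if k = j then c else 0) ps)"

definition sparse_layer :: "nat \<Rightarrow> ((nat \<times> real) list \<times> real) list \<Rightarrow> layer" where
  "sparse_layer d rs = (d, \<lambda>i j. if i < length rs then sparse_row (fst (rs!i)) j else 0,
                           \<lambda>i. if i < length rs then snd (rs!i) else 0)"

lemma fst_sparse_layer [simp]: "fst (sparse_layer d rs) = d"
  by (simp add: sparse_layer_def)

lemma sum_sparse_row:
  assumes "\<forall>(k,c)\<in>set ps. k < n"
  shows "(\<Sum>j<n. sparse_row ps j * h j) = sparse_dot ps h"
  using assms
proof (induction ps)
  case Nil
  then show ?case by (simp add: sparse_row_def sparse_dot_def)
next
  case (Cons p ps)
  obtain k c where p: "p = (k,c)" by force
  have "k < n" using Cons.prems p by auto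
  then have "(\<Sum>j<n. (if k = j then c else 0) * h j) = c * h k"
    by (simp add: if_distrib[of "\<lambda>v. v * _"] sum.delta cong: if_cong)
  then show ?case
    using Cons by (simp add: p sparse_row_def sparse_dot_def distrib_right sum.distrib)
qed

lemma affine_layer_sparse_layer:
  assumes "\<forall>r\<in>set rs. \<forall>(k,c)\<in>set (fst r). k < n"
  shows "affine_layer n (sparse_layer d rs) h i =
     (if i < d \<and> i < length rs then sparse_dot (fst (rs!i)) h + snd (rs!i) else 0)"
proof (cases "i < d \<and> i < length rs")
  case True
  then have "\<forall>(k,c)\<in>set (fst (rs!i)). k < n" using assms nth_mem by blast
  then show ?thesis using True sum_sparse_row[of "fst (rs!i)" n h]
    by (simp add: affine_layer_def sparse_layer_def)
qed (auto simp: affine_layer_def sparse_layer_def)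

definition relu_layer :: "nat \<Rightarrow> layer \<Rightarrow> (nat \<Rightarrow> real) \<Rightarrow> (nat \<Rightarrow> real)" where
  "relu_layer n l h = (\<lambda>i. relu (affine_layer n l h i))"

lemma relu_layer_sparse_layer:
  assumes "list_all (\<lambda>r. list_all (\<lambda>(k,c). k < n) (fst r)) rs"
  shows "relu_layer n (sparse_layer d rs) h i =
    (if i < d \<and> i < length rs then relu (sparse_dot (fst (rs!i)) h + snd (rs!i)) else 0)"
  using assms by (simp add: relu_layer_def affine_layer_sparse_layer list_all_iff relu_def)

fun hidden_eval :: "nat \<Rightarrow> layer list \<Rightarrow> (nat \<Rightarrow> real) \<Rightarrow> (nat \<Rightarrow> real)" where
  "hidden_eval n [] h = h"
| "hidden_eval n (l # ls) h = hidden_eval (fst l) ls (relu_layer n l h)"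

lemma nn_eval_snoc:
  "nn_eval n (ls @ [l]) x =
     affine_layer (if ls = [] then n else fst (last ls)) l (hidden_eval n ls x)"
proof (induction ls arbitrary: n x)
  case (Cons l' ls)
  then show ?case by (cases ls) (auto simp: relu_layer_def)
qed simp

definition uniform_width :: "nat \<Rightarrow> layer list \<Rightarrow> bool" where
  "uniform_width n ls \<longleftrightarrow> (\<forall>l\<in>set ls. fst l = n)"

lemma uniform_width_append [simp]:
  "uniform_width n (xs @ ys) \<longleftrightarrow> uniform_width n xs \<and> uniform_width n ys"
  by (auto simp: uniform_width_def)

lemma uniform_width_Cons [simp]:
  "uniform_width n (l # ls) \<longleftrightarrow> fst l = n \<and> uniform_width n ls"
  by (simp add: uniform_width_def)

lemma uniform_width_Nil [simp]: "uniform_width n []"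
  by (simp add: uniform_width_def)

lemma hidden_eval_append:
  "uniform_width n xs \<Longrightarrow> hidden_eval n (xs @ ys) h = hidden_eval n ys (hidden_eval n xs h)"
  by (induction xs arbitrary: h) auto

lemma relu_nonneg [simp]: "relu x \<ge> 0"
  by (simp add: relu_def)

lemma relu_of_nonneg: "x \<ge> 0 \<Longrightarrow> relu x = x"
  by (simp add: relu_def)

lemma relu_diff [simp]: "relu x - relu (- x) = x"
  by (simp add: relu_def)

lemma relu_add_relu_uminus [simp]: "relu (x + relu (-x)) = relu x"
  by (simp add: relu_def)

section \<open>Approximate multiplication\<close>

text \<open>All hidden layers have 11 neurons. Neuron 0 carries the shifted input X = x - a \<ge> 0, neurons 1 and 2
  carry an accumulator G as relu G and relu (-G) (ReLU would destroy a signed value), neurons 3, 4 and 5, 6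
  carry the Horner variable u and the Horner value z the same way, the rest is scratch space.\<close>

definition acc_state :: "real \<Rightarrow> real \<Rightarrow> (nat \<Rightarrow> real) \<Rightarrow> bool" where
  "acc_state X G h \<longleftrightarrow> h 0 = X \<and> h 1 = relu G \<and> h 2 = relu (-G)"

definition horner_state :: "real \<Rightarrow> real \<Rightarrow> real \<Rightarrow> real \<Rightarrow> (nat \<Rightarrow> real) \<Rightarrow> bool" where
  "horner_state X G u z h \<longleftrightarrow>
     acc_state X G h \<and> h 3 = relu u \<and> h 4 = relu (-u) \<and> h 5 = relu z \<and> h 6 = relu (-z)"

definition polar_state :: "real \<Rightarrow> real \<Rightarrow> real \<Rightarrow> real \<Rightarrow> real \<Rightarrow> (nat \<Rightarrow> real) \<Rightarrow> bool" where
  "polar_state X G u w1 w2 h \<longleftrightarrow> acc_state X G h \<and> h 3 = relu u \<and> h 4 = relu (-u)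
     \<and> h 5 = relu w1 \<and> h 6 = relu (-w1) \<and> h 7 = relu w2 \<and> h 8 = relu (-w2)"

text \<open>Two squarings in parallel: za, zb are the current iterates of the tent map, aa, ab the current
  approximations of the squares.\<close>
definition square_state ::
    "real \<Rightarrow> real \<Rightarrow> real \<Rightarrow> real \<Rightarrow> real \<Rightarrow> real \<Rightarrow> real \<Rightarrow> (nat \<Rightarrow> real) \<Rightarrow> bool" where
  "square_state X G u za aa zb ab h \<longleftrightarrow> acc_state X G h \<and> h 3 = relu u \<and> h 4 = relu (-u) \<and>
     h 5 = za \<and> h 6 = relu (za - 1/2) \<and> h 7 = aa \<and> h 8 = zb \<and> h 9 = relu (zb - 1/2) \<and> h 10 = ab"

definition carry_rows :: "((nat \<times> real) list \<times> real) list" where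
  "carry_rows = [([(0,1)],0), ([(1,1)],0), ([(2,1)],0), ([(3,1)],0), ([(4,1)],0)]"

definition polar_layer :: "real \<Rightarrow> layer" where
  "polar_layer B = sparse_layer 11 (carry_rows @
     [([(3,1),(4,-1),(5,1/B),(6,-1/B)],0), ([(3,-1),(4,1),(5,-1/B),(6,1/B)],0),
      ([(3,1),(4,-1),(5,-1/B),(6,1/B)],0), ([(3,-1),(4,1),(5,1/B),(6,-1/B)],0)])"

lemma polar_layer_correct:
  assumes "horner_state X G u z h" "X \<ge> 0"
  shows "polar_state X G u (u + z/B) (u - z/B) (relu_layer 11 (polar_layer B) h)"
proof -
  have e: "h 3 = u + relu (-u)" "h 5 = z + relu (-z)" "h 4 = relu (-u)" "h 6 = relu (-z)"
    "h 0 = X" "h (Suc 0) = relu G" "h 2 = relu (-G)"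
    using assms by (auto simp: horner_state_def acc_state_def relu_def)
  show ?thesis unfolding polar_state_def polar_layer_def
    by (simp add: relu_layer_sparse_layer carry_rows_def sparse_dot_def acc_state_def e relu_of_nonneg
        assms algebra_simps diff_divide_distrib add_divide_distrib)
qed

definition halve_abs_layer :: layer where
  "halve_abs_layer = sparse_layer 11 (carry_rows @
     [([(5,1/2),(6,1/2)],0), ([(5,1/2),(6,1/2)],-1/2), ([(5,1/2),(6,1/2)],0),
      ([(7,1/2),(8,1/2)],0), ([(7,1/2),(8,1/2)],-1/2), ([(7,1/2),(8,1/2)],0)])"

lemma halve_abs_layer_correct:
  assumes "polar_state X G u w1 w2 h" "X \<ge> 0"
  shows "square_state X G u (\<bar>w1\<bar>/2) (\<bar>w1\<bar>/2) (\<bar>w2\<bar>/2) (\<bar>w2\<bar>/2) (relu_layer 11 halve_abs_layer h)"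
proof -
  have e: "h 3 = relu u" "h 5 = relu w1" "h 4 = relu (-u)" "h 6 = \<bar>w1\<bar> - relu w1" "h 7 = relu w2"
    "h 8 = \<bar>w2\<bar> - relu w2" "h 0 = X" "h (Suc 0) = relu G" "h 2 = relu (-G)"
    using assms by (auto simp: polar_state_def acc_state_def relu_def)
  show ?thesis unfolding square_state_def halve_abs_layer_def
    by (simp add: relu_layer_sparse_layer carry_rows_def sparse_dot_def acc_state_def e relu_of_nonneg
        assms algebra_simps)
qed

definition tent :: "real \<Rightarrow> real" where
  "tent z = (if z \<le> 1/2 then 2*z else 2 - 2*z)"

lemma tent_range: "0 \<le> z \<Longrightarrow> z \<le> 1 \<Longrightarrow> 0 \<le> tent z \<and> tent z \<le> 1"
  by (simp add: tent_def)

lemma funpow_tent_range: "0 \<le> z \<Longrightarrow> z \<le> 1 \<Longrightarrow> 0 \<le> (tent^^s) z \<and> (tent^^s) z \<le> 1"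
  by (induction s) (auto simp: tent_range)

lemma relu_minus_half: "0 \<le> z \<Longrightarrow> relu (z - 1/2) = (2*z - tent z)/4"
  by (simp add: relu_def tent_def)

text \<open>Yarotsky's approximation of a^2 on [0,1]: subtracting the sawtooth functions tent^i a / 4^i,
  i = 1..s, from a gives the piecewise linear interpolant of a^2 on the grid of mesh 2^-s.\<close>
fun approx_sq :: "nat \<Rightarrow> real \<Rightarrow> real" where
  "approx_sq 0 a = a"
| "approx_sq (Suc s) a = approx_sq s a - (tent^^Suc s) a / 4^Suc s"

lemma approx_sq_eq:
  assumes "0 \<le> a" "a \<le> 1"
  shows "approx_sq s a = a^2 + ((tent^^s) a - ((tent^^s) a)^2) / 4^s"
proof (induction s)
  case (Suc s)
  define y where "y = (tent^^s) a"
  have key: "y - y^2 = tent y / 4 + (tent y - (tent y)^2)/4"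
    by (auto simp: tent_def power2_eq_square field_simps)
  have "approx_sq (Suc s) a = a^2 + (y - y^2)/4^s - tent y / 4^Suc s"
    using Suc by (simp add: y_def)
  also have "\<dots> = a^2 + (tent y - (tent y)^2)/4^Suc s"
    by (subst key) (simp add: field_simps)
  finally show ?case by (simp add: y_def)
qed simp

lemma approx_sq_bounds:
  assumes "0 \<le> a" "a \<le> 1"
  shows "a^2 \<le> approx_sq s a \<and> approx_sq s a \<le> a^2 + 1/(4 * 4^s)"
proof -
  define y where "y = (tent^^s) a"
  have "0 \<le> y" "y \<le> 1" using funpow_tent_range[OF assms] y_def by auto
  moreover have "0 \<le> (y - 1/2)^2" by simp
  moreover have "0 \<le> y * (1 - y)" using \<open>0 \<le> y\<close> \<open>y \<le> 1\<close> by simp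
  ultimately have "0 \<le> y - y^2" "y - y^2 \<le> 1/4" by (auto simp: power2_eq_square algebra_simps)
  then have "0 \<le> (y - y^2)/4^s" "(y - y^2)/4^s \<le> (1/4)/4^s"
    by (auto intro: divide_right_mono simp del: divide_divide_eq_left)
  then show ?thesis using approx_sq_eq[OF assms, of s] by (simp add: y_def)
qed

definition tent_layer :: "nat \<Rightarrow> layer" where
  "tent_layer s = sparse_layer 11 (carry_rows @
     [([(5,2),(6,-4)],0), ([(5,2),(6,-4)],-1/2), ([(7,1),(5,-2/4^(s+1)),(6,4/4^(s+1))],0),
      ([(8,2),(9,-4)],0), ([(8,2),(9,-4)],-1/2), ([(10,1),(8,-2/4^(s+1)),(9,4/4^(s+1))],0)])"

lemma tent_layer_correct:
  assumes "square_state X G u za aa zb ab h" "X \<ge> 0" "0 \<le> za" "za \<le> 1" "0 \<le> zb" "zb \<le> 1"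
    "0 \<le> aa - tent za / 4^(s+1)" "0 \<le> ab - tent zb / 4^(s+1)"
  shows "square_state X G u (tent za) (aa - tent za / 4^(s+1)) (tent zb) (ab - tent zb / 4^(s+1))
           (relu_layer 11 (tent_layer s) h)"
proof -
  have e: "h 3 = relu u" "h 5 = za" "h 4 = relu (-u)" "h 6 = (2*za - tent za)/4" "h 7 = aa" "h 8 = zb"
    "h 9 = (2*zb - tent zb)/4" "h 10 = ab" "h 0 = X" "h (Suc 0) = relu G" "h 2 = relu (-G)"
    using assms relu_minus_half by (auto simp: square_state_def acc_state_def)
  have "0 \<le> tent za" "0 \<le> tent zb" using tent_range assms by auto
  moreover have "sparse_dot [(5,2),(6,-4)] h = tent za" "sparse_dot [(8,2),(9,-4)] h = tent zb"
    "sparse_dot [(7,1),(5,-2/4^(s+1)),(6,4/4^(s+1))] h = aa - tent za / 4^(s+1)"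
    "sparse_dot [(10,1),(8,-2/4^(s+1)),(9,4/4^(s+1))] h = ab - tent zb / 4^(s+1)"
    by (simp_all add: sparse_dot_def e field_simps)
  ultimately show ?thesis unfolding square_state_def tent_layer_def using assms
    by (simp add: relu_layer_sparse_layer carry_rows_def sparse_dot_def e acc_state_def relu_of_nonneg)
qed

fun tent_layers :: "nat \<Rightarrow> layer list" where
  "tent_layers 0 = []"
| "tent_layers (Suc s) = tent_layers s @ [tent_layer s]"

lemma uniform_width_tent_layers [simp]: "uniform_width 11 (tent_layers m)"
  by (induction m) (auto simp: tent_layer_def)

lemma length_tent_layers [simp]: "length (tent_layers m) = m"
  by (induction m) auto

lemma tent_layers_correct:
  assumes "square_state X G u a a b b h" "X \<ge> 0" "0 \<le> a" "a \<le> 1" "0 \<le> b" "b \<le> 1"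
  shows "square_state X G u ((tent^^m) a) (approx_sq m a) ((tent^^m) b) (approx_sq m b)
           (hidden_eval 11 (tent_layers m) h)"
proof (induction m)
  case (Suc m)
  have "approx_sq (Suc m) a \<ge> 0" "approx_sq (Suc m) b \<ge> 0"
    using approx_sq_bounds[of _ "Suc m"] assms by (meson order.trans zero_le_power2)+
  then show ?case
    using tent_layer_correct[OF Suc.IH assms(2)] funpow_tent_range[OF assms(3,4), of m]
      funpow_tent_range[OF assms(5,6), of m]
    by (simp add: hidden_eval_append)
qed (use assms in simp)

definition unpolar_layer :: "real \<Rightarrow> real \<Rightarrow> layer" where
  "unpolar_layer B d = sparse_layer 11 (carry_rows @ [([(7,B),(10,-B)], d), ([(7,-B),(10,B)], -d)])"

lemma unpolar_layer_correct:
  assumes "square_state X G u za aa zb ab h" "X \<ge> 0"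
  shows "horner_state X G u (B*(aa - ab) + d) (relu_layer 11 (unpolar_layer B d) h)"
proof -
  have e: "h 3 = relu u" "h 4 = relu (-u)" "h 7 = aa" "h 10 = ab" "h 0 = X" "h (Suc 0) = relu G"
    "h 2 = relu (-G)"
    using assms by (auto simp: square_state_def acc_state_def)
  have "sparse_dot [(7,B),(10,-B)] h = B*(aa - ab)" "sparse_dot [(7,-B),(10,B)] h = - (B*(aa - ab))"
    by (simp_all add: sparse_dot_def e algebra_simps)
  then show ?thesis unfolding horner_state_def unpolar_layer_def using assms
    by (simp add: relu_layer_sparse_layer carry_rows_def sparse_dot_def e acc_state_def relu_of_nonneg
        right_diff_distrib)
qed

definition mult_add_block :: "real \<Rightarrow> nat \<Rightarrow> real \<Rightarrow> layer list" where
  "mult_add_block B m d = [polar_layer B, halve_abs_layer] @ tent_layers m @ [unpolar_layer B d]"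

text \<open>Polarization: u z = B ((|u + z/B|/2)^2 - (|u - z/B|/2)^2), with both arguments in [0,1]
  when |u| \<le> 1 and |z| \<le> B.\<close>
definition approx_mult :: "real \<Rightarrow> nat \<Rightarrow> real \<Rightarrow> real \<Rightarrow> real" where
  "approx_mult B m u z = B * (approx_sq m (\<bar>u + z/B\<bar>/2) - approx_sq m (\<bar>u - z/B\<bar>/2))"

lemma uniform_width_mult_add_block [simp]: "uniform_width 11 (mult_add_block B m d)"
  by (simp add: mult_add_block_def polar_layer_def halve_abs_layer_def unpolar_layer_def)

lemma length_mult_add_block [simp]: "length (mult_add_block B m d) = m + 3"
  by (simp add: mult_add_block_def)

lemma polar_args_range:
  fixes u z B :: real
  assumes "\<bar>u\<bar> \<le> 1" "\<bar>z\<bar> \<le> B" "B > 0"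
  shows "0 \<le> \<bar>u + z/B\<bar>/2" "\<bar>u + z/B\<bar>/2 \<le> 1" "0 \<le> \<bar>u - z/B\<bar>/2" "\<bar>u - z/B\<bar>/2 \<le> 1"
proof -
  have "\<bar>z/B\<bar> \<le> 1" using assms by (simp add: abs_divide pos_divide_le_eq)
  then show "0 \<le> \<bar>u + z/B\<bar>/2" "\<bar>u + z/B\<bar>/2 \<le> 1" "0 \<le> \<bar>u - z/B\<bar>/2" "\<bar>u - z/B\<bar>/2 \<le> 1"
    using abs_triangle_ineq[of u "z/B"] abs_triangle_ineq4[of u "z/B"] assms(1) by simp_all
qed

lemma mult_add_block_correct:
  assumes "horner_state X G u z h" "X \<ge> 0" "\<bar>u\<bar> \<le> 1" "\<bar>z\<bar> \<le> B" "B > 0"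
  shows "horner_state X G u (approx_mult B m u z + d) (hidden_eval 11 (mult_add_block B m d) h)"
proof -
  note polar = polar_layer_correct[OF assms(1,2), of B]
  note halved = halve_abs_layer_correct[OF polar assms(2)]
  note squared = tent_layers_correct[OF halved assms(2) polar_args_range[OF assms(3-5)], of m]
  show ?thesis
    using unpolar_layer_correct[OF squared assms(2)]
    by (simp add: mult_add_block_def approx_mult_def hidden_eval_append polar_layer_def
        halve_abs_layer_def)
qed

lemma approx_mult_error:
  assumes "\<bar>u\<bar> \<le> 1" "\<bar>z\<bar> \<le> B" "B > 0"
  shows "\<bar>approx_mult B m u z - u * z\<bar> \<le> B / (4 * 4^m)"
proof -
  define a where "a = \<bar>u + z/B\<bar>/2"
  define b where "b = \<bar>u - z/B\<bar>/2"
  note range = polar_args_range[OF assms, folded a_def b_def]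
  have "a^2 - b^2 = u * (z/B)"
    using assms(3) by (simp add: a_def b_def power_divide power2_eq_square field_simps)
  then have "\<bar>approx_sq m a - approx_sq m b - u * (z/B)\<bar> \<le> 1 / (4 * 4^m)"
    using approx_sq_bounds[OF range(1,2), of m] approx_sq_bounds[OF range(3,4), of m] by linarith
  then have "B * \<bar>approx_sq m a - approx_sq m b - u * (z/B)\<bar> \<le> B / (4 * 4^m)"
    using assms(3) mult_left_mono[of _ _ B] by fastforce
  moreover have "approx_mult B m u z - u * z = B * (approx_sq m a - approx_sq m b - u * (z/B))"
    using assms(3) by (simp add: approx_mult_def a_def b_def right_diff_distrib)
  ultimately show ?thesis using assms(3) by (simp add: abs_mult)
qed

section \<open>Horner evaluation on a piece\<close>

definition horner :: "real list \<Rightarrow> real \<Rightarrow> real" where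
  "horner ds u = foldr (\<lambda>d z. u * z + d) ds 0"

definition approx_horner :: "real \<Rightarrow> nat \<Rightarrow> real list \<Rightarrow> real \<Rightarrow> real" where
  "approx_horner B m ds u = foldr (\<lambda>d z. approx_mult B m u z + d) ds 0"

fun horner_blocks :: "real \<Rightarrow> nat \<Rightarrow> real list \<Rightarrow> layer list" where
  "horner_blocks B m [] = []"
| "horner_blocks B m (d # ds) = horner_blocks B m ds @ mult_add_block B m d"

lemma uniform_width_horner_blocks [simp]: "uniform_width 11 (horner_blocks B m ds)"
  by (induction ds) simp_all

lemma length_horner_blocks [simp]: "length (horner_blocks B m ds) = length ds * (m + 3)"
  by (induction ds) simp_all

lemma horner_eq_sum: "horner ds u = (\<Sum>k<length ds. ds!k * u^k)"
proof (induction ds)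
  case (Cons d ds)
  have "horner (d # ds) u = u * horner ds u + d" by (simp add: horner_def)
  also have "\<dots> = (\<Sum>k<length ds. ds!k * u^(Suc k)) + d"
    using Cons by (simp add: sum_distrib_left algebra_simps)
  also have "\<dots> = (\<Sum>k<Suc (length ds). (d # ds)!k * u^k)"
    by (subst sum.lessThan_Suc_shift) (simp add: algebra_simps)
  finally show ?case by simp
qed (simp add: horner_def)

lemma abs_horner_le: "\<bar>u\<bar> \<le> 1 \<Longrightarrow> \<bar>horner ds u\<bar> \<le> sum_list (map abs ds)"
proof (induction ds)
  case (Cons d ds)
  have "\<bar>u * horner ds u\<bar> \<le> \<bar>horner ds u\<bar>"
    using Cons.prems by (simp add: abs_mult mult_left_le_one_le)
  then show ?case using Cons abs_triangle_ineq[of "u * horner ds u" d] by (simp add: horner_def)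
qed (simp add: horner_def)

text \<open>The bound B must dominate the exact Horner values plus the accumulated error, so that every
  multiplication happens in the range where approx_mult is accurate.\<close>
lemma horner_blocks_correct:
  assumes "horner_state X G u 0 h" "X \<ge> 0" "\<bar>u\<bar> \<le> 1" "B > 0"
    "sum_list (map abs ds) \<le> S" "S + real (length ds) * (B/(4*4^m)) \<le> B"
  shows "horner_state X G u (approx_horner B m ds u) (hidden_eval 11 (horner_blocks B m ds) h) \<and>
    \<bar>approx_horner B m ds u - horner ds u\<bar> \<le> real (length ds) * (B/(4*4^m))"
  using assms(5,6)
proof (induction ds)
  case Nil
  then show ?case using assms by (simp add: approx_horner_def horner_def)
next
  case (Cons d ds)
  define e where "e = B/(4*4^m)"
  have "e \<ge> 0" using assms by (simp add: e_def)
  moreover have "S + (1 + real (length ds)) * e \<le> B" using Cons.prems unfolding e_def[symmetric] by simp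
  ultimately have bound: "S + real (length ds) * e \<le> B" by (simp add: algebra_simps)
  have sum_ds: "sum_list (map abs ds) \<le> S" using Cons.prems by simp
  note IH = Cons.IH[OF sum_ds bound[unfolded e_def]]
  define z where "z = approx_horner B m ds u"
  define p where "p = horner ds u"
  have zp: "\<bar>z - p\<bar> \<le> real (length ds) * e" using IH by (simp add: z_def p_def e_def)
  have "\<bar>p\<bar> \<le> S" using abs_horner_le[OF assms(3), of ds] sum_ds by (simp add: p_def)
  then have zB: "\<bar>z\<bar> \<le> B" using zp bound by linarith
  have "\<bar>approx_mult B m u z - u * z\<bar> \<le> e" using approx_mult_error[OF assms(3) zB assms(4)] by (simp add: e_def)
  moreover have "\<bar>u * (z - p)\<bar> \<le> \<bar>z - p\<bar>" using assms(3) by (simp add: abs_mult mult_left_le_one_le)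
  ultimately have "\<bar>(approx_mult B m u z + d) - (u * p + d)\<bar> \<le> e + real (length ds) * e"
    using zp by (simp add: algebra_simps)
  moreover have "horner_state X G u (approx_mult B m u z + d)
      (hidden_eval 11 (horner_blocks B m (d # ds)) h)"
    using mult_add_block_correct[OF _ assms(2,3) zB assms(4)] IH
    by (simp add: hidden_eval_append z_def)
  ultimately show ?case
    by (simp add: approx_horner_def horner_def z_def p_def e_def algebra_simps add_divide_distrib)
qed

definition clamp_layer :: "real \<Rightarrow> real \<Rightarrow> real \<Rightarrow> layer" where
  "clamp_layer a l r = sparse_layer 11
     [([(0,1)],0), ([(1,1)],0), ([(2,1)],0), ([(0,1)], a - l), ([(0,1)], a - r)]"

definition rescale_layer :: "real \<Rightarrow> real \<Rightarrow> real \<Rightarrow> layer" where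
  "rescale_layer l c s = sparse_layer 11
     [([(0,1)],0), ([(1,1)],0), ([(2,1)],0), ([(3,1/s),(4,-1/s)], (l - c)/s),
      ([(3,-1/s),(4,1/s)], -((l - c)/s)), ([],0), ([],0)]"

definition accumulate_layer :: "real \<Rightarrow> layer" where
  "accumulate_layer y = sparse_layer 11
     [([(0,1)],0), ([(1,1),(2,-1),(5,1),(6,-1)], -y), ([(1,-1),(2,1),(5,-1),(6,1)], y)]"

lemma clamp_layer_correct:
  assumes "acc_state X G h" "X \<ge> 0"
  shows "acc_state X G (relu_layer 11 (clamp_layer a l r) h)"
    "relu_layer 11 (clamp_layer a l r) h 3 = relu (X + a - l)"
    "relu_layer 11 (clamp_layer a l r) h 4 = relu (X + a - r)"
proof -
  have "h 0 = X" "h (Suc 0) = relu G" "h 2 = relu (-G)" using assms by (auto simp: acc_state_def)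
  then show "acc_state X G (relu_layer 11 (clamp_layer a l r) h)"
    "relu_layer 11 (clamp_layer a l r) h 3 = relu (X + a - l)"
    "relu_layer 11 (clamp_layer a l r) h 4 = relu (X + a - r)"
    using assms by (simp_all add: acc_state_def clamp_layer_def relu_layer_sparse_layer sparse_dot_def
        relu_of_nonneg algebra_simps)
qed

lemma rescale_layer_correct:
  assumes "acc_state X G h" "X \<ge> 0" "h 3 = relu p" "h 4 = relu q" "s > 0"
  shows "horner_state X G ((l + relu p - relu q - c)/s) 0 (relu_layer 11 (rescale_layer l c s) h)"
proof -
  have "h 0 = X" "h (Suc 0) = relu G" "h 2 = relu (-G)" using assms by (auto simp: acc_state_def)
  then have "sparse_dot [(0,1)] h = X" "sparse_dot [(1,1)] h = relu G" "sparse_dot [(2,1)] h = relu (-G)"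
    "sparse_dot [] h = 0"
    "sparse_dot [(3,1/s),(4,-1/s)] h + (l - c)/s = (l + relu p - relu q - c)/s"
    "sparse_dot [(3,-1/s),(4,1/s)] h + -((l - c)/s) = - ((l + relu p - relu q - c)/s)"
    using assms by (simp_all add: sparse_dot_def field_simps)
  note this[simplified]
  then show ?thesis unfolding horner_state_def acc_state_def rescale_layer_def using assms
    by (simp add: relu_layer_sparse_layer relu_of_nonneg)
qed

lemma accumulate_layer_correct:
  assumes "horner_state X G u z h" "X \<ge> 0"
  shows "acc_state X (G + z - y) (relu_layer 11 (accumulate_layer y) h)"
proof -
  have "h 0 = X" "h (Suc 0) = G + relu (-G)" "h 2 = relu (-G)" "h 5 = z + relu (-z)" "h 6 = relu (-z)"
    using assms by (auto simp: acc_state_def horner_state_def relu_def)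
  moreover have "relu (- G - z + y) = relu (y - (G + z))" by (simp add: algebra_simps)
  ultimately show ?thesis unfolding acc_state_def accumulate_layer_def using assms
    by (simp add: relu_layer_sparse_layer sparse_dot_def relu_of_nonneg)
qed

definition piece ::
    "real \<Rightarrow> real \<Rightarrow> real \<Rightarrow> real \<Rightarrow> real \<Rightarrow> real \<Rightarrow> real \<Rightarrow> nat \<Rightarrow> real list \<Rightarrow> layer list" where
  "piece a l r c s y B m ds =
     [clamp_layer a l r, rescale_layer l c s] @ horner_blocks B m ds @ [accumulate_layer y]"

lemma uniform_width_piece [simp]: "uniform_width 11 (piece a l r c s y B m ds)"
  by (simp add: piece_def clamp_layer_def rescale_layer_def accumulate_layer_def)

lemma length_piece [simp]: "length (piece a l r c s y B m ds) = length ds * (m + 3) + 3"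
  by (simp add: piece_def)

lemma piece_correct:
  assumes "acc_state (x - a) G h" "a \<le> x" "l \<le> r" "s > 0" "\<bar>max l (min x r) - c\<bar> \<le> s" "B > 0"
    "sum_list (map abs ds) \<le> S" "S + real (length ds) * (B/(4*4^m)) \<le> B"
  shows "acc_state (x - a) (G + approx_horner B m ds ((max l (min x r) - c)/s) - y)
           (hidden_eval 11 (piece a l r c s y B m ds) h)"
proof -
  have X: "x - a \<ge> 0" using assms(2) by simp
  have u: "l + relu (x - a + a - l) - relu (x - a + a - r) = max l (min x r)"
    using assms(3) by (auto simp: relu_def)
  have "\<bar>(max l (min x r) - c)/s\<bar> \<le> 1" using assms(4,5) by (simp add: abs_divide)
  note clamped = clamp_layer_correct[OF assms(1) X, of a l r]
  note rescaled = rescale_layer_correct[OF clamped(1) X clamped(2,3) assms(4), where c = c and l = l, unfolded u]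
  note evaluated = horner_blocks_correct[OF rescaled X \<open>\<bar>_\<bar> \<le> 1\<close> assms(6-8)]
  show ?thesis using accumulate_layer_correct[OF conjunct1[OF evaluated] X]
    by (simp add: piece_def hidden_eval_append clamp_layer_def rescale_layer_def)
qed

lemma concat_pieces_correct:
  assumes "\<And>j. j < K \<Longrightarrow> uniform_width 11 (pc j)"
    "\<And>j G h. j < K \<Longrightarrow> acc_state X G h \<Longrightarrow> acc_state X (G + \<delta> j) (hidden_eval 11 (pc j) h)"
    "acc_state X G h"
  shows "acc_state X (G + (\<Sum>j<K. \<delta> j)) (hidden_eval 11 (concat (map pc [0..<K])) h)"
  using assms
proof (induction K)
  case (Suc K)
  have "acc_state X (G + (\<Sum>j<K. \<delta> j)) (hidden_eval 11 (concat (map pc [0..<K])) h)"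
    using Suc by simp
  note Suc.prems(2)[OF lessI this]
  moreover have "uniform_width 11 (concat (map pc [0..<K]))" using Suc.prems(1) by (induction K) auto
  ultimately show ?case by (simp add: hidden_eval_append add.assoc)
qed simp

definition input_layer :: "real \<Rightarrow> real \<Rightarrow> layer" where
  "input_layer a y = sparse_layer 11 [([(0,1)], -a), ([], y), ([], -y)]"

definition output_layer :: layer where
  "output_layer = sparse_layer 1 [([(1,1),(2,-1)],0)]"

definition network :: "real \<Rightarrow> real \<Rightarrow> layer list \<Rightarrow> layer list" where
  "network a y body = input_layer a y # body @ [output_layer]"

lemma nn_realize_network:
  assumes "uniform_width 11 body" "\<And>h. acc_state (x - a) y h \<Longrightarrow> acc_state (x - a) G (hidden_eval 11 body h)"
    "a \<le> x"
  shows "nn_realize (network a y body) x = G"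
proof -
  define x0 :: "nat \<Rightarrow> real" where "x0 = (\<lambda>i. if i = 0 then x else 0)"
  have "acc_state (x - a) y (relu_layer 1 (input_layer a y) x0)"
    unfolding acc_state_def input_layer_def using assms(3)
    by (simp add: relu_layer_sparse_layer sparse_dot_def x0_def relu_of_nonneg)
  then have body: "acc_state (x - a) G (hidden_eval 11 body (relu_layer 1 (input_layer a y) x0))"
    by (rule assms(2))
  have "fst (last (input_layer a y # body)) = 11"
    using assms(1) by (cases body rule: rev_cases) (auto simp: input_layer_def)
  then have "nn_realize (network a y body) x =
      affine_layer 11 output_layer (hidden_eval 11 body (relu_layer 1 (input_layer a y) x0)) 0"
    using nn_eval_snoc[of 1 "input_layer a y # body" output_layer x0]
    by (simp add: nn_realize_def network_def x0_def[symmetric] input_layer_def)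
  also have "\<dots> = G" using body unfolding output_layer_def acc_state_def
    by (subst affine_layer_sparse_layer) (auto simp: sparse_dot_def)
  finally show ?thesis .
qed

lemma network_shape:
  assumes "uniform_width 11 body"
  shows "nn_valid (network a y body)" "nn_depth (network a y body) = length body + 1"
    "nn_width (network a y body) = 11"
proof -
  show "nn_valid (network a y body)" by (simp add: nn_valid_def network_def output_layer_def)
  show "nn_depth (network a y body) = length body + 1" by (simp add: nn_depth_def network_def)
  have "set (map fst (butlast (network a y body))) = {11}"
    using assms by (auto simp: network_def butlast_append input_layer_def uniform_width_def)
  then show "nn_width (network a y body) = 11" by (simp add: nn_width_def)
qed

definition zero_network :: "layer list" where
  "zero_network = [sparse_layer 1 []]"

lemma zero_network_shape:
  "nn_valid zero_network" "nn_depth zero_network = 0" "nn_width zero_network = 0"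
  "nn_realize zero_network x = 0"
  by (simp_all add: zero_network_def nn_valid_def nn_depth_def nn_width_def nn_realize_def
      affine_layer_def sparse_layer_def)

section \<open>Piecewise power series\<close>

lemma power_series_tail_bound:
  fixes d :: "nat \<Rightarrow> real"
  assumes summable: "summable (\<lambda>k. \<bar>d k\<bar> * 2^k)" and u: "\<bar>u\<bar> \<le> 1"
  shows "\<bar>(\<Sum>k. d k * u^k) - (\<Sum>k<n. d k * u^k)\<bar> \<le> (\<Sum>k. \<bar>d k\<bar> * 2^k) / 2^n"
proof -
  define p where "p = (\<lambda>k. \<bar>d k\<bar> * (2::real)^k)"
  have term_le: "\<bar>d (k + n) * u^(k + n)\<bar> \<le> p (k + n) / 2^n" for k
  proof -
    have "\<bar>u\<bar>^(k + n) \<le> 1" using u by (simp add: power_le_one)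
    also have "(1::real) \<le> 2^k" by simp
    finally have "\<bar>d (k + n) * u^(k + n)\<bar> \<le> \<bar>d (k + n)\<bar> * 2^k"
      unfolding abs_mult power_abs by (intro mult_left_mono) auto
    then show ?thesis by (simp add: p_def power_add)
  qed
  have sp: "summable (\<lambda>k. p (k + n) / 2^n)"
    using summable_ignore_initial_segment[OF summable[folded p_def], of n] by (intro summable_divide)
  then have sg: "summable (\<lambda>k. \<bar>d (k + n) * u^(k + n)\<bar>)"
    by (rule summable_comparison_test'[where N = 0]) (use term_le in auto)
  then have "summable (\<lambda>k. d (k + n) * u^(k + n))" by (rule summable_rabs_cancel)
  then have "summable (\<lambda>k. d k * u^k)" by (rule summable_iff_shift[THEN iffD1])
  then have "(\<Sum>k. d k * u^k) - (\<Sum>k<n. d k * u^k) = (\<Sum>k. d (k + n) * u^(k + n))"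
    using suminf_split_initial_segment[of "\<lambda>k. d k * u^k" n] by simp
  also have "\<bar>\<dots>\<bar> \<le> (\<Sum>k. \<bar>d (k + n) * u^(k + n)\<bar>)" by (rule summable_rabs[OF sg])
  also have "\<dots> \<le> (\<Sum>k. p (k + n) / 2^n)" by (rule suminf_le[OF term_le sg sp])
  also have "\<dots> = (\<Sum>k. p (k + n)) / 2^n"
    using summable_ignore_initial_segment[OF summable[folded p_def], of n] by (rule suminf_divide)
  also have "(\<Sum>k. p (k + n)) \<le> (\<Sum>k. p k)"
    using suminf_split_initial_segment[OF summable[folded p_def], of n]
    by (simp add: p_def sum_nonneg)
  then have "(\<Sum>k. p (k + n)) / 2^n \<le> (\<Sum>k. p k) / 2^n" by (simp add: divide_right_mono)
  finally show ?thesis by (simp add: p_def)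
qed

lemma sum_clamp_telescope:
  fixes t :: "nat \<Rightarrow> real" and g :: "real \<Rightarrow> real"
  assumes "\<And>j. t j \<le> t (Suc j)" "t 0 \<le> x"
  shows "(\<Sum>j<N. g (max (t j) (min x (t (Suc j)))) - g (t j)) = g (min x (t N)) - g (t 0)"
proof (induction N)
  case (Suc N)
  have "t N \<le> t (Suc N)" by (rule assms(1))
  then show ?case using Suc by (cases "x \<le> t N") (auto simp: min_def max_def)
qed (use assms in \<open>simp add: min_def\<close>)

lemma real_div_four_power_le: "real n / 4^n \<le> 1 / (2::real)^n"
proof -
  have "real n \<le> 2^n" using less_exp[of n] by (simp add: less_imp_le)
  moreover have "(4::real)^n = 2^n * 2^n" by (simp flip: power_mult_distrib)
  ultimately show ?thesis by (simp add: field_simps)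
qed

lemma inverse_two_power_floor_sqrt_le:
  assumes "L \<ge> (0::real)"
  shows "1 / 2 ^ nat \<lfloor>sqrt L\<rfloor> \<le> 2 * exp (- ln 2 * sqrt L)"
proof -
  define n where "n = nat \<lfloor>sqrt L\<rfloor>"
  have "sqrt L \<le> real n + 1" unfolding n_def using assms by linarith
  then have "ln 2 * sqrt L \<le> ln 2 * (real n + 1)" by (intro mult_left_mono) auto
  have "1 / 2^n = exp (- (real n * ln 2))"
    by (simp add: exp_minus exp_of_nat_mult field_simps)
  also have "\<dots> \<le> exp (ln 2 - ln 2 * sqrt L)"
    using \<open>ln 2 * sqrt L \<le> _\<close> by (simp add: algebra_simps)
  also have "\<dots> = 2 * exp (- ln 2 * sqrt L)" by (simp add: exp_diff exp_minus field_simps)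
  finally show ?thesis by (simp add: n_def)
qed

lemma floor_sqrt_square_le:
  fixes L :: nat
  defines "n \<equiv> nat \<lfloor>sqrt (real L)\<rfloor>"
  shows "n * n \<le> L" "n \<le> L"
proof -
  have "real n \<le> sqrt (real L)" unfolding n_def by simp
  then have "real n * real n \<le> sqrt (real L) * sqrt (real L)" by (intro mult_mono) auto
  then show "n * n \<le> L" by (simp flip: of_nat_mult)
  then show "n \<le> L" by (cases n) auto
qed

locale piecewise_series =
  fixes f :: "real \<Rightarrow> real" and a b :: real and K :: nat and t c s :: "nat \<Rightarrow> real"
    and d :: "nat \<Rightarrow> nat \<Rightarrow> real"
  assumes K_pos: "K > 0"
    and t_mono: "\<And>j. t j \<le> t (Suc j)"
    and t_0: "t 0 = a" and t_K: "t K = b"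
    and s_pos: "\<And>j. j < K \<Longrightarrow> s j > 0"
    and near_centre: "\<And>j y. j < K \<Longrightarrow> t j \<le> y \<Longrightarrow> y \<le> t (Suc j) \<Longrightarrow> \<bar>y - c j\<bar> < s j"
    and f_eq_series:
      "\<And>j y. j < K \<Longrightarrow> t j \<le> y \<Longrightarrow> y \<le> t (Suc j) \<Longrightarrow> f y = (\<Sum>k. d j k * ((y - c j)/s j)^k)"
    and summable_coeffs: "\<And>j. j < K \<Longrightarrow> summable (\<lambda>k. \<bar>d j k\<bar> * 2^k)"
begin

definition coeff_mass :: real where
  "coeff_mass = (\<Sum>j<K. \<Sum>k. \<bar>d j k\<bar> * 2^k)"

definition mult_range :: real where
  "mult_range = 2 * coeff_mass + 1"

definition error_const :: real where
  "error_const = real K * (coeff_mass + mult_range)"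

definition coeffs :: "nat \<Rightarrow> nat \<Rightarrow> real list" where
  "coeffs n j = map (d j) [0..<n]"

definition clamp_to :: "nat \<Rightarrow> real \<Rightarrow> real" where
  "clamp_to j x = max (t j) (min x (t (Suc j)))"

definition body :: "nat \<Rightarrow> layer list" where
  "body n = concat (map (\<lambda>j. piece a (t j) (t (Suc j)) (c j) (s j) (f (t j)) mult_range n (coeffs n j))
                        [0..<K])"

definition increment :: "nat \<Rightarrow> real \<Rightarrow> nat \<Rightarrow> real" where
  "increment n x j = approx_horner mult_range n (coeffs n j) ((clamp_to j x - c j)/s j) - f (t j)"

lemma coeff_mass_nonneg: "coeff_mass \<ge> 0"
  unfolding coeff_mass_def by (auto intro!: sum_nonneg suminf_nonneg summable_coeffs)

lemma mult_range_pos: "mult_range > 0"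
  using coeff_mass_nonneg by (simp add: mult_range_def)

lemma error_const_nonneg: "error_const \<ge> 0"
  using coeff_mass_nonneg mult_range_pos by (simp add: error_const_def)

lemma series_mass_le: "j < K \<Longrightarrow> (\<Sum>k. \<bar>d j k\<bar> * 2^k) \<le> coeff_mass"
  unfolding coeff_mass_def
  by (rule member_le_sum[of j "{..<K}" "\<lambda>j. \<Sum>k. \<bar>d j k\<bar> * 2^k"])
    (auto intro!: suminf_nonneg summable_coeffs)

lemma sum_abs_coeffs_le:
  assumes "j < K"
  shows "sum_list (map abs (coeffs n j)) \<le> coeff_mass"
proof -
  have "sum_list (map abs (coeffs n j)) = (\<Sum>k<n. \<bar>d j k\<bar>)"
    by (simp add: coeffs_def sum_list_sum_nth atLeast0LessThan)
  also have "\<dots> \<le> (\<Sum>k<n. \<bar>d j k\<bar> * 2^k)"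
    by (intro sum_mono) (simp add: mult_le_cancel_left1)
  also have "\<dots> \<le> (\<Sum>k. \<bar>d j k\<bar> * 2^k)" by (intro sum_le_suminf summable_coeffs[OF assms]) auto
  also have "\<dots> \<le> coeff_mass" by (rule series_mass_le[OF assms])
  finally show ?thesis .
qed

lemma horner_error_le: "real (length (coeffs n j)) * (mult_range / (4 * 4^n)) \<le> mult_range / 4 / 2^n"
proof -
  have "real (length (coeffs n j)) * (mult_range / (4 * 4^n)) = mult_range / 4 * (real n / 4^n)"
    by (simp add: coeffs_def field_simps)
  also have "\<dots> \<le> mult_range / 4 * (1 / 2^n)"
    by (intro mult_left_mono real_div_four_power_le) (use mult_range_pos in simp)
  finally show ?thesis by simp
qed

lemma mult_range_sufficient: "coeff_mass + real (length (coeffs n j)) * (mult_range / (4 * 4^n)) \<le> mult_range"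
proof -
  have "mult_range / 4 / 2^n \<le> mult_range / 4"
    using divide_left_mono[of 1 "2^n" "mult_range / 4"] mult_range_pos by simp
  moreover have "coeff_mass + mult_range / 4 \<le> mult_range"
    using coeff_mass_nonneg by (simp add: mult_range_def)
  ultimately show ?thesis using horner_error_le[of n j] by linarith
qed

lemma uniform_width_body: "uniform_width 11 (body n)"
  using uniform_width_piece unfolding body_def uniform_width_def by fastforce

lemma clamp_to_in_piece: "t j \<le> clamp_to j x" "clamp_to j x \<le> t (Suc j)"
  using t_mono[of j] by (auto simp: clamp_to_def)

lemma nn_realize_network_body:
  assumes "a \<le> x"
  shows "nn_realize (network a (f a) (body n)) x = f a + (\<Sum>j<K. increment n x j)"
proof (rule nn_realize_network[OF _ _ assms])
  show "uniform_width 11 (body n)" by (rule uniform_width_body)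
  fix h assume "acc_state (x - a) (f a) h"
  then show "acc_state (x - a) (f a + (\<Sum>j<K. increment n x j)) (hidden_eval 11 (body n) h)"
    unfolding body_def
  proof (rule concat_pieces_correct[rotated 2])
    fix j G h' assume j: "j < K" and acc: "acc_state (x - a) G h'"
    have "\<bar>max (t j) (min x (t (Suc j))) - c j\<bar> \<le> s j"
      using near_centre[OF j clamp_to_in_piece, of x] by (simp add: clamp_to_def)
    from piece_correct[OF acc assms t_mono s_pos[OF j] this mult_range_pos sum_abs_coeffs_le[OF j]
        mult_range_sufficient[of n j], where y = "f (t j)"]
    show "acc_state (x - a) (G + increment n x j)
        (hidden_eval 11 (piece a (t j) (t (Suc j)) (c j) (s j) (f (t j)) mult_range n (coeffs n j)) h')"
      by (simp add: increment_def clamp_to_def algebra_simps)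
  qed simp
qed

lemma series_at_clamp_to:
  assumes "j < K"
  shows "f (clamp_to j x) = (\<Sum>k. d j k * ((clamp_to j x - c j) / s j)^k)"
    "\<bar>(clamp_to j x - c j) / s j\<bar> < 1"
  using f_eq_series[OF assms clamp_to_in_piece] near_centre[OF assms clamp_to_in_piece] s_pos[OF assms]
  by (simp_all add: abs_divide)

lemma increment_error:
  assumes "j < K"
  shows "\<bar>increment n x j - (f (clamp_to j x) - f (t j))\<bar> \<le> (coeff_mass + mult_range) / 2^n"
proof -
  define u where "u = (clamp_to j x - c j) / s j"
  note series = series_at_clamp_to[OF assms, of x, folded u_def]
  have u: "\<bar>u\<bar> \<le> 1" using series(2) by simp
  have "\<bar>approx_horner mult_range n (coeffs n j) u - horner (coeffs n j) u\<bar> \<le> mult_range / 2^n"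
  proof -
    have "horner_state 0 0 u 0 (\<lambda>i. if i = 3 then relu u else if i = 4 then relu (-u) else 0)"
      by (simp add: horner_state_def acc_state_def relu_def)
    from horner_blocks_correct[OF this _ u mult_range_pos sum_abs_coeffs_le[OF assms]
        mult_range_sufficient[of n]]
    have "\<bar>approx_horner mult_range n (coeffs n j) u - horner (coeffs n j) u\<bar>
        \<le> real (length (coeffs n j)) * (mult_range / (4 * 4^n))" by simp
    also have "\<dots> \<le> mult_range / 4 / 2^n" by (rule horner_error_le)
    also have "\<dots> \<le> mult_range / 2^n" by (intro divide_right_mono) (use mult_range_pos in auto)
    finally show ?thesis .
  qed
  moreover have "horner (coeffs n j) u = (\<Sum>k<n. d j k * u^k)"
    by (simp add: horner_eq_sum coeffs_def)
  moreover have "\<bar>(\<Sum>k. d j k * u^k) - (\<Sum>k<n. d j k * u^k)\<bar> \<le> coeff_mass / 2^n"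
    using power_series_tail_bound[OF summable_coeffs[OF assms] u, of n]
      divide_right_mono[OF series_mass_le[OF assms], of "2^n"] by simp
  ultimately show ?thesis
    by (simp add: increment_def u_def[symmetric] series(1) add_divide_distrib)
qed

lemma f_telescope: "x \<in> {a..b} \<Longrightarrow> f x - f a = (\<Sum>j<K. f (clamp_to j x) - f (t j))"
  using sum_clamp_telescope[of t x f K, OF t_mono] t_0 t_K by (simp add: clamp_to_def min_def)

lemma network_error:
  assumes "x \<in> {a..b}"
  shows "\<bar>f x - nn_realize (network a (f a) (body n)) x\<bar> \<le> error_const / 2^n"
proof -
  have "\<bar>f x - nn_realize (network a (f a) (body n)) x\<bar> =
      \<bar>\<Sum>j<K. increment n x j - (f (clamp_to j x) - f (t j))\<bar>"
    using assms f_telescope[OF assms] by (simp add: nn_realize_network_body sum_subtractf abs_minus_commute)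
  also have "\<dots> \<le> (\<Sum>j<K. \<bar>increment n x j - (f (clamp_to j x) - f (t j))\<bar>)" by (rule sum_abs)
  also have "\<dots> \<le> (\<Sum>j<K. (coeff_mass + mult_range) / 2^n)" by (intro sum_mono increment_error) simp
  finally show ?thesis by (simp add: error_const_def)
qed

lemma length_body: "length (body n) = K * (n * (n + 3) + 3)"
  by (simp add: body_def length_concat coeffs_def o_def sum_list_triv)

lemma abs_f_clamp_to_le:
  assumes "j < K"
  shows "\<bar>f (clamp_to j x)\<bar> \<le> coeff_mass"
proof -
  have "\<bar>(clamp_to j x - c j) / s j\<bar> \<le> 1" using series_at_clamp_to(2)[OF assms, of x] by simp
  from power_series_tail_bound[OF summable_coeffs[OF assms] this, of 0] show ?thesis
    using series_at_clamp_to(1)[OF assms, of x] series_mass_le[OF assms] by simp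
qed

lemma abs_f_le:
  assumes "x \<in> {a..b}"
  shows "\<bar>f x\<bar> \<le> \<bar>f a\<bar> + 2 * real K * coeff_mass"
proof -
  have "\<bar>f (clamp_to j x) - f (t j)\<bar> \<le> 2 * coeff_mass" if "j < K" for j
    using abs_f_clamp_to_le[OF that, of x] abs_f_clamp_to_le[OF that, of "t j"] t_mono[of j]
    by (simp add: clamp_to_def)
  then have "\<bar>f x - f a\<bar> \<le> (\<Sum>j<K. 2 * coeff_mass)"
    unfolding f_telescope[OF assms] by (intro order.trans[OF sum_abs] sum_mono) simp
  then show ?thesis by simp
qed

lemma deep_network_approximation:
  assumes "L > 0"
  shows "\<exists>\<Phi>. nn_valid \<Phi> \<and>
    (\<forall>x \<in> {a..b}. \<bar>f x - nn_realize \<Phi> x\<bar> \<le> 2 * error_const * exp (- ln 2 * sqrt (real L))) \<and>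
    nn_depth \<Phi> \<le> (7 * K + 1) * L \<and> nn_width \<Phi> = 11"
proof -
  define n where "n = nat \<lfloor>sqrt (real L)\<rfloor>"
  define \<Phi> where "\<Phi> = network a (f a) (body n)"
  note shape = network_shape[OF uniform_width_body[of n], of a "f a", folded \<Phi>_def]
  have "\<bar>f x - nn_realize \<Phi> x\<bar> \<le> 2 * error_const * exp (- ln 2 * sqrt (real L))" if "x \<in> {a..b}" for x
  proof -
    have "\<bar>f x - nn_realize \<Phi> x\<bar> \<le> error_const * (1 / 2^n)"
      using network_error[OF that] by (simp add: \<Phi>_def)
    also have "\<dots> \<le> error_const * (2 * exp (- ln 2 * sqrt (real L)))"
      using inverse_two_power_floor_sqrt_le[of "real L"] error_const_nonneg
      by (intro mult_left_mono) (auto simp: n_def)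
    finally show ?thesis by simp
  qed
  moreover have "nn_depth \<Phi> \<le> (7 * K + 1) * L"
  proof -
    have "n * (n + 3) + 3 \<le> 7 * L"
      using floor_sqrt_square_le[of L, folded n_def] assms by (simp add: algebra_simps)
    then have "K * (n * (n + 3) + 3) \<le> K * (7 * L)" by simp
    then show ?thesis using shape(2) length_body[of n] assms by (simp add: algebra_simps)
  qed
  ultimately show ?thesis using shape(1,3) by blast
qed

lemma exponential_approximation:
  "\<exists>C > 0. \<forall>L :: nat. \<exists>\<Phi>. nn_valid \<Phi> \<and>
    (\<forall>x \<in> {a..b}. \<bar>f x - nn_realize \<Phi> x\<bar> \<le> C * exp (- ln 2 * sqrt (real L))) \<and>
    real (nn_depth \<Phi>) \<le> C * real L \<and> real (nn_width \<Phi>) \<le> C"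
proof -
  define C where "C = 2 * error_const + 7 * real K + 11 + \<bar>f a\<bar> + 2 * real K * coeff_mass"
  have "0 \<le> 2 * real K * coeff_mass" using coeff_mass_nonneg by simp
  then have "C > 0" using error_const_nonneg by (simp add: C_def)
  moreover have "\<exists>\<Phi>. nn_valid \<Phi> \<and>
    (\<forall>x \<in> {a..b}. \<bar>f x - nn_realize \<Phi> x\<bar> \<le> C * exp (- ln 2 * sqrt (real L))) \<and>
    real (nn_depth \<Phi>) \<le> C * real L \<and> real (nn_width \<Phi>) \<le> C" for L
  proof (cases "L = 0")
    case True
    have "\<bar>f x\<bar> \<le> C" if "x \<in> {a..b}" for x
      using abs_f_le[OF that] error_const_nonneg by (simp add: C_def)
    then show ?thesis using True zero_network_shape \<open>C > 0\<close> by (intro exI[of _ zero_network]) auto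
  next
    case False
    then obtain \<Phi> where \<Phi>: "nn_valid \<Phi>" "nn_width \<Phi> = 11" "nn_depth \<Phi> \<le> (7 * K + 1) * L"
      "\<forall>x \<in> {a..b}. \<bar>f x - nn_realize \<Phi> x\<bar> \<le> 2 * error_const * exp (- ln 2 * sqrt (real L))"
      using deep_network_approximation[of L] by blast
    have bounds: "2 * error_const \<le> C" "7 * real K + 1 \<le> C" "11 \<le> C"
      using coeff_mass_nonneg error_const_nonneg by (auto simp: C_def)
    have "real (nn_depth \<Phi>) \<le> real ((7 * K + 1) * L)" using \<Phi>(3) by (simp only: of_nat_le_iff)
    also have "\<dots> = (7 * real K + 1) * real L" by (simp add: algebra_simps)
    also have "\<dots> \<le> C * real L" by (rule mult_right_mono[OF bounds(2)]) simp
    finally have "real (nn_depth \<Phi>) \<le> C * real L" .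
    moreover have "\<bar>f x - nn_realize \<Phi> x\<bar> \<le> C * exp (- ln 2 * sqrt (real L))" if "x \<in> {a..b}" for x
    proof -
      have "\<bar>f x - nn_realize \<Phi> x\<bar> \<le> 2 * error_const * exp (- ln 2 * sqrt (real L))"
        using \<Phi>(4) that by blast
      also have "\<dots> \<le> C * exp (- ln 2 * sqrt (real L))" by (rule mult_right_mono[OF bounds(1)]) simp
      finally show ?thesis .
    qed
    ultimately show ?thesis using \<Phi>(1,2) bounds(3) by (intro exI[of _ \<Phi>]) auto
  qed
  ultimately show ?thesis by blast
qed

end

section \<open>Analytic functions are piecewise power series\<close>

lemma uniform_partition_subordinate:
  fixes r :: "real \<Rightarrow> real"
  assumes "a \<le> b" "\<And>x. x \<in> {a..b} \<Longrightarrow> r x > 0"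
  obtains K cen where "K > 0" "\<And>j. j < K \<Longrightarrow> cen j \<in> {a..b}"
    "\<And>j y. j < K \<Longrightarrow> a + real j * ((b - a) / K) \<le> y \<Longrightarrow> y \<le> a + real (Suc j) * ((b - a) / K) \<Longrightarrow>
       \<bar>y - cen j\<bar> < r (cen j)"
proof -
  obtain e where "e > 0" and e: "\<And>x. x \<in> {a..b} \<Longrightarrow> \<exists>G \<in> (\<lambda>c. ball c (r c)) ` {a..b}. ball x e \<subseteq> G"
  proof (rule Heine_Borel_lemma[of "{a..b}" "(\<lambda>c. ball c (r c)) ` {a..b}"])
    show "{a..b} \<subseteq> \<Union> ((\<lambda>c. ball c (r c)) ` {a..b})"
      using assms(2) by (auto intro!: bexI)
  qed auto
  define K where "K = nat \<lceil>(b - a)/e\<rceil> + 1"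
  define mesh where "mesh = (b - a) / real K"
  have "K > 0" by (simp add: K_def)
  have "real K \<ge> (b - a)/e + 1" unfolding K_def by linarith
  then have "mesh < e" using \<open>e > 0\<close> \<open>K > 0\<close> by (simp add: mesh_def field_simps)
  have "mesh \<ge> 0" using assms(1) by (simp add: mesh_def)
  have grid_in: "a + real j * mesh \<in> {a..b}" if "j < K" for j
  proof -
    have "real j * mesh \<le> real K * mesh" using that \<open>mesh \<ge> 0\<close> by (intro mult_right_mono) auto
    moreover have "0 \<le> real j * mesh" using \<open>mesh \<ge> 0\<close> by simp
    ultimately show ?thesis using \<open>K > 0\<close> \<open>mesh \<ge> 0\<close> by (simp add: mesh_def)
  qed
  have "\<forall>j\<in>{..<K}. \<exists>c. c \<in> {a..b} \<and> ball (a + real j * mesh) e \<subseteq> ball c (r c)"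
    using e grid_in by blast
  from bchoice[OF this] obtain cen
    where "\<forall>j\<in>{..<K}. cen j \<in> {a..b} \<and> ball (a + real j * mesh) e \<subseteq> ball (cen j) (r (cen j))"
    by blast
  then have cen: "\<And>j. j < K \<Longrightarrow> cen j \<in> {a..b} \<and> ball (a + real j * mesh) e \<subseteq> ball (cen j) (r (cen j))"
    by simp
  show thesis
  proof (rule that[OF \<open>K > 0\<close>, of cen])
    fix j y assume "j < K" and y: "a + real j * ((b - a) / K) \<le> y" "y \<le> a + real (Suc j) * ((b - a) / K)"
    then have "a + real j * mesh \<le> y" "y \<le> a + real j * mesh + mesh"
      unfolding mesh_def[symmetric] by (simp_all add: distrib_right)
    then have "y \<in> ball (a + real j * mesh) e"
      using \<open>mesh < e\<close> by (simp add: dist_real_def)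
    then show "\<bar>y - cen j\<bar> < r (cen j)" using cen[OF \<open>j < K\<close>] by (auto simp: dist_real_def)
  qed (use cen in blast)
qed

lemma analytic_extension_local_series:
  assumes "has_analytic_extension f a b"
  obtains R C where "\<And>x. x \<in> {a..b} \<Longrightarrow> R x > 0"
    "\<And>x. x \<in> {a..b} \<Longrightarrow> summable (\<lambda>k. \<bar>C x k\<bar> * R x ^ k)"
    "\<And>x y. x \<in> {a..b} \<Longrightarrow> y \<in> {a..b} \<Longrightarrow> \<bar>y - x\<bar> < R x \<Longrightarrow> f y = (\<Sum>k. C x k * (y - x)^k)"
proof -
  obtain F \<alpha> \<beta> where "\<alpha> < a" "b < \<beta>" "analytic_interval F \<alpha> \<beta>" and F_eq: "\<forall>x\<in>{a..b}. F x = f x"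
    using assms unfolding has_analytic_extension_def by blast
  define expands_at where "expands_at x0 R C \<longleftrightarrow> R > 0 \<and> summable (\<lambda>k. \<bar>C k\<bar> * R ^ k) \<and>
      (\<forall>x\<in>{a..b}. \<bar>x - x0\<bar> < R \<longrightarrow> f x = (\<Sum>k. C k * (x - x0)^k))"
    for x0 R and C :: "nat \<Rightarrow> real"
  have "\<exists>R C. x0 \<in> {a..b} \<longrightarrow> expands_at x0 R C" for x0
  proof (cases "x0 \<in> {a..b}")
    case True
    with \<open>\<alpha> < a\<close> \<open>b < \<beta>\<close> have "x0 \<in> {\<alpha><..<\<beta>}" by auto
    with \<open>analytic_interval F \<alpha> \<beta>\<close> obtain R C where "R > 0" "summable (\<lambda>k. \<bar>C k\<bar> * R ^ k)"
      and "\<forall>x\<in>{\<alpha><..<\<beta>}. \<bar>x - x0\<bar> < R \<longrightarrow> F x = (\<Sum>k. C k * (x - x0)^k)"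
      unfolding analytic_interval_def by blast
    moreover have "{a..b} \<subseteq> {\<alpha><..<\<beta>}" using \<open>\<alpha> < a\<close> \<open>b < \<beta>\<close> by auto
    ultimately show ?thesis using F_eq by (intro exI[of _ R] exI[of _ C]) (auto simp: expands_at_def)
  qed auto
  then obtain R C where "\<And>x0. x0 \<in> {a..b} \<Longrightarrow> expands_at x0 (R x0) (C x0)"
    by metis
  then show thesis by (intro that[of R C]) (auto simp: expands_at_def)
qed

text \<open>Expanding around centres c with s = R c / 2, half the radius of convergence, makes the
  rescaled coefficients d k = C k * s^k summable against 2^k.\<close>
lemma analytic_extension_piecewise_series:
  assumes "has_analytic_extension f a b" "a \<le> b"
  obtains K t c s d where "piecewise_series f a b K t c s d"
proof -
  obtain R C where R_pos: "\<And>x. x \<in> {a..b} \<Longrightarrow> R x > 0"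
    and summable: "\<And>x. x \<in> {a..b} \<Longrightarrow> summable (\<lambda>k. \<bar>C x k\<bar> * R x ^ k)"
    and series: "\<And>x y. x \<in> {a..b} \<Longrightarrow> y \<in> {a..b} \<Longrightarrow> \<bar>y - x\<bar> < R x \<Longrightarrow> f y = (\<Sum>k. C x k * (y - x)^k)"
    by (rule analytic_extension_local_series[OF assms(1)]) blast
  obtain K cen where "K > 0" and cen_in: "\<And>j. j < K \<Longrightarrow> cen j \<in> {a..b}" and near:
    "\<And>j y. j < K \<Longrightarrow> a + real j * ((b - a) / K) \<le> y \<Longrightarrow> y \<le> a + real (Suc j) * ((b - a) / K) \<Longrightarrow>
       \<bar>y - cen j\<bar> < R (cen j) / 2"
    by (rule uniform_partition_subordinate[OF assms(2), of "\<lambda>x. R x / 2"]) (use R_pos in auto)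
  define t where "t j = a + real j * ((b - a) / K)" for j
  define s where "s j = R (cen j) / 2" for j
  define d where "d j k = C (cen j) k * s j ^ k" for j k
  have in_ab: "y \<in> {a..b}" if "j < K" "t j \<le> y" "y \<le> t (Suc j)" for j y
  proof -
    have "real (Suc j) * ((b - a) / K) \<le> real K * ((b - a) / K)"
      using that(1) assms(2) by (intro mult_right_mono) auto
    then have "t (Suc j) \<le> b" using \<open>K > 0\<close> by (simp add: t_def)
    moreover have "a \<le> t j" using assms(2) by (simp add: t_def)
    ultimately show ?thesis using that by simp
  qed
  have "piecewise_series f a b K t cen s d"
  proof
    fix j y assume j: "j < K" and y: "t j \<le> y" "y \<le> t (Suc j)"
    have "s j > 0" using R_pos[OF cen_in[OF j]] by (simp add: s_def)
    show close: "\<bar>y - cen j\<bar> < s j" using near[OF j y[unfolded t_def]] by (simp add: s_def)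
    have "f y = (\<Sum>k. C (cen j) k * (y - cen j)^k)"
      using series[OF cen_in[OF j] in_ab[OF j y]] close \<open>s j > 0\<close>
      by (simp add: s_def)
    then show "f y = (\<Sum>k. d j k * ((y - cen j) / s j)^k)"
      using \<open>s j > 0\<close> by (simp add: d_def power_divide)
  next
    fix j assume j: "j < K"
    show "s j > 0" using R_pos[OF cen_in[OF j]] by (simp add: s_def)
    have "\<bar>d j k\<bar> * 2^k = \<bar>C (cen j) k\<bar> * R (cen j) ^ k" for k
      using R_pos[OF cen_in[OF j]] by (simp add: d_def s_def abs_mult power_abs power_divide)
    then show "summable (\<lambda>k. \<bar>d j k\<bar> * 2^k)" using summable[OF cen_in[OF j]] by simp
  qed (use \<open>K > 0\<close> assms(2) in \<open>auto simp: t_def intro!: divide_right_mono mult_right_mono\<close>)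
  then show thesis by (rule that)
qed

theorem mainTheorem6:
  fixes f :: "real \<Rightarrow> real" and a b :: real
  assumes "has_analytic_extension f a b"
  shows "\<exists>C \<gamma>. C > 0 \<and> \<gamma> > 0 \<and>
    (\<forall>L :: nat. \<exists>\<Phi>. nn_valid \<Phi> \<and>
        (\<forall>x \<in> {a..b}. \<bar>f x - nn_realize \<Phi> x\<bar> \<le> C * exp (- \<gamma> * sqrt (real L))) \<and>
        real (nn_depth \<Phi>) \<le> C * real L \<and>
        real (nn_width \<Phi>) \<le> C)"
proof (cases "a \<le> b")
  case True
  then obtain K t c s d where "piecewise_series f a b K t c s d"
    using analytic_extension_piecewise_series[OF assms] by blast
  then interpret piecewise_series f a b K t c s d .
  obtain C where "C > 0" "\<forall>L :: nat. \<exists>\<Phi>. nn_valid \<Phi> \<and>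
      (\<forall>x \<in> {a..b}. \<bar>f x - nn_realize \<Phi> x\<bar> \<le> C * exp (- ln 2 * sqrt (real L))) \<and>
      real (nn_depth \<Phi>) \<le> C * real L \<and> real (nn_width \<Phi>) \<le> C"
    using exponential_approximation by blast
  then show ?thesis by (intro exI[of _ C] exI[of _ "ln 2"]) auto
next
  case False
  then show ?thesis
    using zero_network_shape by (intro exI[of _ 1] allI exI[of _ zero_network]) auto
qed

end
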